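(* For a $*$-ring $R$ the following are equivalent: (1) $R$ is $*$-clean and $0,1$ are its only projections; (2) $R$ is clean and $0,1$ are its only idempotents; (3) $R$ is a local ring.
   Context: A $*$-ring is a ring with identity with an involution $*$. A projection is $p$ with $p^2=p=p^*$. $R$ is clean if every element is a sum of an idempotent and a unit; $*$-clean if every element is a sum of a projection and a unit. *)

theory Defs
  imports Main
begin

definition star_ring :: "('a::ring_1 \<Rightarrow> 'a) \<Rightarrow> bool" where
  "star_ring st \<longleftrightarrow>
     (\<forall>x y. st (x + y) = st x + st y) \<and>
     (\<forall>x y. st (x * y) = st y * st x) \<and>
     (\<forall>x. st (st x) = x)"

definition idempotent :: "'a::ring_1 \<Rightarrow> bool" where
  "idempotent e \<longleftrightarrow> e * e = e"

definition projection :: "('a::ring_1 \<Rightarrow> 'a) \<Rightarrow> 'a \<Rightarrow> bool" where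
  "projection st p \<longleftrightarrow> p * p = p \<and> p = st p"

definition ring_unit :: "'a::ring_1 \<Rightarrow> bool" where
  "ring_unit u \<longleftrightarrow> (\<exists>v. u * v = 1 \<and> v * u = 1)"

definition clean_ring :: "'a::ring_1 itself \<Rightarrow> bool" where
  "clean_ring _ \<longleftrightarrow> (\<forall>x::'a. \<exists>e u. idempotent e \<and> ring_unit u \<and> x = e + u)"

definition star_clean_ring :: "('a::ring_1 \<Rightarrow> 'a) \<Rightarrow> bool" where
  "star_clean_ring st \<longleftrightarrow> (\<forall>x. \<exists>p u. projection st p \<and> ring_unit u \<and> x = p + u)"

definition left_ideal :: "'a::ring_1 set \<Rightarrow> bool" where
  "left_ideal I \<longleftrightarrow> 0 \<in> I \<and> (\<forall>x\<in>I. \<forall>y\<in>I. x - y \<in> I) \<and> (\<forall>r. \<forall>x\<in>I. r * x \<in> I)"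

definition maximal_left_ideal :: "'a::ring_1 set \<Rightarrow> bool" where
  "maximal_left_ideal M \<longleftrightarrow> left_ideal M \<and> M \<noteq> UNIV \<and>
     (\<forall>J. left_ideal J \<and> M \<subseteq> J \<and> J \<noteq> UNIV \<longrightarrow> J = M)"

definition local_ring :: "'a::ring_1 itself \<Rightarrow> bool" where
  "local_ring _ \<longleftrightarrow> (\<exists>!M::'a set. maximal_left_ideal M)"

end

theory Submission
  imports Defs
begin

text \<open>All three conditions are equivalent to: for every x, either x or 1 - x is a unit.
  Under this condition every idempotent e is trivial, since one of e, 1 - e is invertible
  and e (1 - e) = 0; and every x is 0 + x or 1 + (x - 1). Conversely a decomposition
  x = e + u with e \<in> {0, 1} makes x or 1 - x a unit. The condition also makes one-sided
  inverses two-sided, so the non-units form a left ideal, necessarily the largest proper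
  one. In a local ring, Zorn's lemma puts every element without a left inverse into the
  maximal left ideal M; M cannot contain a left-invertible a with a y = 1, for then
  1 - y a \<in> M as well, because (1 - y a) y = 0.\<close>

lemma ring_unit_minus: "ring_unit (x::'a::ring_1) \<Longrightarrow> ring_unit (- x)"
  unfolding ring_unit_def by (metis minus_mult_minus)

lemma star_ring_zero: "star_ring st \<Longrightarrow> st 0 = (0::'a::ring_1)"
  unfolding star_ring_def by (metis add_0 add_cancel_left_left)

lemma star_ring_one: "star_ring st \<Longrightarrow> st 1 = (1::'a::ring_1)"
  unfolding star_ring_def by (metis mult_1_left)

lemma idempotent_trivial_if_unit_or_one_minus_unit:
  assumes units: "\<And>x::'a::ring_1. ring_unit x \<or> ring_unit (1 - x)"
    and idem: "e * e = (e::'a)"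
  shows "e = 0 \<or> e = 1"
proof (cases "ring_unit e")
  case True
  then obtain v where "v * e = 1" unfolding ring_unit_def by blast
  then have "e = (v * e) * e" by simp
  also have "\<dots> = v * (e * e)" by (simp only: mult.assoc)
  also have "\<dots> = 1" using idem \<open>v * e = 1\<close> by simp
  finally show ?thesis by simp
next
  case False
  with units obtain v where v: "v * (1 - e) = 1" unfolding ring_unit_def by blast
  from idem have "(1 - e) * e = 0" by (simp add: algebra_simps)
  then have "(v * (1 - e)) * e = 0" by (simp add: mult.assoc)
  with v show ?thesis by simp
qed

lemma decomposition_iff_unit_or_one_minus_unit:
  fixes Q :: "'a::ring_1 \<Rightarrow> bool"
  assumes "Q 0" "Q 1" and Q_idem: "\<And>e. Q e \<Longrightarrow> e * e = e"
  shows "((\<forall>x. \<exists>e u. Q e \<and> ring_unit u \<and> x = e + u) \<and> (\<forall>e. Q e \<longrightarrow> e = 0 \<or> e = 1))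
     \<longleftrightarrow> (\<forall>x::'a. ring_unit x \<or> ring_unit (1 - x))"
proof
  assume decomp: "(\<forall>x. \<exists>e u. Q e \<and> ring_unit u \<and> x = e + u) \<and> (\<forall>e. Q e \<longrightarrow> e = 0 \<or> e = 1)"
  show "\<forall>x::'a. ring_unit x \<or> ring_unit (1 - x)"
  proof
    fix x :: 'a
    from decomp obtain e u where "e = 0 \<or> e = 1" "ring_unit u" "x = e + u" by blast
    then consider "x = u" | "1 - x = - u" by fastforce
    then show "ring_unit x \<or> ring_unit (1 - x)"
      using \<open>ring_unit u\<close> ring_unit_minus[of u] by cases simp_all
  qed
next
  assume units: "\<forall>x::'a. ring_unit x \<or> ring_unit (1 - x)"
  have "\<exists>e u. Q e \<and> ring_unit u \<and> x = e + u" for x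
  proof (cases "ring_unit x")
    case True
    with \<open>Q 0\<close> have "Q 0 \<and> ring_unit x \<and> x = 0 + x" by simp
    then show ?thesis by blast
  next
    case False
    with units have "ring_unit (- (1 - x))" using ring_unit_minus by blast
    with \<open>Q 1\<close> have "Q 1 \<and> ring_unit (- (1 - x)) \<and> x = 1 + - (1 - x)" by simp
    then show ?thesis by blast
  qed
  moreover have "e = 0 \<or> e = 1" if "Q e" for e
    using units Q_idem[OF that] by (intro idempotent_trivial_if_unit_or_one_minus_unit) blast+
  ultimately show "(\<forall>x. \<exists>e u. Q e \<and> ring_unit u \<and> x = e + u) \<and> (\<forall>e. Q e \<longrightarrow> e = 0 \<or> e = 1)"
    by blast
qed

lemma left_ideal_add:
  assumes "left_ideal J" "x \<in> J" "y \<in> J"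
  shows "x + (y::'a::ring_1) \<in> J"
proof -
  from assms have "0 - y \<in> J" unfolding left_ideal_def by blast
  with assms have "x - (0 - y) \<in> J" unfolding left_ideal_def by blast
  then show ?thesis by simp
qed

lemma left_ideal_eq_UNIV_iff:
  assumes "left_ideal J"
  shows "J = UNIV \<longleftrightarrow> (1::'a::ring_1) \<in> J"
proof
  assume "1 \<in> J"
  with assms have "r * 1 \<in> J" for r unfolding left_ideal_def by blast
  then show "J = UNIV" by auto
qed simp

lemma left_ideal_proper_no_left_inverse:
  assumes "left_ideal J" "J \<noteq> UNIV" "x \<in> J"
  shows "a * x \<noteq> (1::'a::ring_1)"
proof
  assume "a * x = 1"
  moreover have "a * x \<in> J" using assms(1,3) unfolding left_ideal_def by blast
  ultimately show False using assms(1,2) left_ideal_eq_UNIV_iff by auto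
qed

lemma left_ideal_principal: "left_ideal (range (\<lambda>r. r * (x::'a::ring_1)))"
  unfolding left_ideal_def
  by (auto simp: mult.assoc[symmetric] left_diff_distrib[symmetric] intro: range_eqI[of _ _ 0])

lemma chain_subset_left_ideal_Union:
  assumes "chain\<^sub>\<subseteq> C" "C \<noteq> {}" "\<And>J. J \<in> C \<Longrightarrow> left_ideal J"
  shows "left_ideal (\<Union>C :: 'a::ring_1 set)"
  unfolding left_ideal_def
proof (intro conjI ballI allI)
  show "0 \<in> \<Union>C" using assms(2,3) unfolding left_ideal_def by blast
next
  fix u v assume "u \<in> \<Union>C" "v \<in> \<Union>C"
  then obtain X Y where "X \<in> C" "Y \<in> C" "u \<in> X" "v \<in> Y" by blast
  moreover have "X \<subseteq> Y \<or> Y \<subseteq> X"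
    using assms(1) \<open>X \<in> C\<close> \<open>Y \<in> C\<close> unfolding chain_subset_def by blast
  ultimately show "u - v \<in> \<Union>C" using assms(3) unfolding left_ideal_def by blast
next
  fix r u assume "u \<in> \<Union>C"
  then show "r * u \<in> \<Union>C" using assms(3) unfolding left_ideal_def by blast
qed

lemma maximal_left_ideal_containing:
  fixes I :: "'a::ring_1 set"
  assumes "left_ideal I" "I \<noteq> UNIV"
  shows "\<exists>M. maximal_left_ideal M \<and> I \<subseteq> M"
proof -
  define A where "A = {J. left_ideal J \<and> I \<subseteq> J \<and> 1 \<notin> J}"
  have "\<exists>M\<in>A. \<forall>J\<in>A. M \<subseteq> J \<longrightarrow> J = M"
  proof (rule subset_Zorn_nonempty)
    show "A \<noteq> {}" using assms left_ideal_eq_UNIV_iff unfolding A_def by blast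
  next
    fix C assume "C \<noteq> {}" "subset.chain A C"
    then have "C \<subseteq> A" "chain\<^sub>\<subseteq> C" by (auto simp: chain_subset_alt_def subset.chain_def)
    with \<open>C \<noteq> {}\<close> have "left_ideal (\<Union>C)"
      using chain_subset_left_ideal_Union unfolding A_def by blast
    moreover have "I \<subseteq> \<Union>C" "1 \<notin> \<Union>C" using \<open>C \<subseteq> A\<close> \<open>C \<noteq> {}\<close> unfolding A_def by auto
    ultimately show "\<Union>C \<in> A" unfolding A_def by blast
  qed
  then obtain M where "M \<in> A" and M_max: "\<And>J. J \<in> A \<Longrightarrow> M \<subseteq> J \<Longrightarrow> J = M" by blast
  have "maximal_left_ideal M"
    unfolding maximal_left_ideal_def
  proof (intro conjI allI impI)
    show "left_ideal M" "M \<noteq> UNIV" using \<open>M \<in> A\<close> unfolding A_def by auto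
  next
    fix J assume "left_ideal J \<and> M \<subseteq> J \<and> J \<noteq> UNIV"
    with \<open>M \<in> A\<close> have "J \<in> A" "M \<subseteq> J" using left_ideal_eq_UNIV_iff unfolding A_def by auto
    then show "J = M" by (rule M_max)
  qed
  with \<open>M \<in> A\<close> show ?thesis unfolding A_def by blast
qed

lemma left_inverse_imp_unit_if_unit_or_one_minus_unit:
  assumes units: "\<And>x::'a::ring_1. ring_unit x \<or> ring_unit (1 - x)"
    and ab: "a * b = (1::'a)"
  shows "ring_unit b"
proof -
  have "(b * a) * (b * a) = b * a" by (metis ab mult.assoc mult_1_left)
  then have "b * a = 0 \<or> b * a = 1"
    by (rule idempotent_trivial_if_unit_or_one_minus_unit[OF units])
  moreover have "b * a \<noteq> 0"
  proof
    assume "b * a = 0"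
    have "1 = (a * b) * (a * b)" using ab by simp
    also have "\<dots> = a * (b * a) * b" by (simp add: mult.assoc)
    finally show False using \<open>b * a = 0\<close> by simp
  qed
  ultimately show ?thesis using ab unfolding ring_unit_def by blast
qed

lemma nonunits_left_ideal_if_unit_or_one_minus_unit:
  assumes units: "\<And>x::'a::ring_1. ring_unit x \<or> ring_unit (1 - x)"
  shows "left_ideal {x::'a. \<not> ring_unit x}"
proof -
  have mult: "\<not> ring_unit (r * x)" if "\<not> ring_unit x" for r x :: 'a
    using that left_inverse_imp_unit_if_unit_or_one_minus_unit[OF units, of "_ * r" x]
    unfolding ring_unit_def by (metis mult.assoc)
  have diff: "\<not> ring_unit (x - y)" if "\<not> ring_unit x" "\<not> ring_unit y" for x y :: 'a
  proof
    assume "ring_unit (x - y)"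
    then obtain w where w: "w * (x - y) = 1" unfolding ring_unit_def by blast
    \<comment> \<open>w x = 1 + w y, and w y is a non-unit, so 1 + w y is a unit.\<close>
    have "ring_unit (1 - (- (w * y)))"
      using units mult[OF that(2), of "- w"] by (metis mult_minus_left)
    also have "1 - (- (w * y)) = w * x" using w by (simp add: algebra_simps)
    finally show False using mult[OF that(1)] by blast
  qed
  have "\<not> ring_unit (0::'a)" unfolding ring_unit_def by simp
  with mult diff show ?thesis unfolding left_ideal_def by blast
qed

lemma local_ring_if_unit_or_one_minus_unit:
  assumes units: "\<And>x::'a::ring_1. ring_unit x \<or> ring_unit (1 - x)"
  shows "local_ring TYPE('a)"
proof -
  define N where "N = {x::'a. \<not> ring_unit x}"
  have "left_ideal N" unfolding N_def by (rule nonunits_left_ideal_if_unit_or_one_minus_unit[OF units])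
  have "1 \<notin> N" unfolding N_def ring_unit_def by auto
  then have "N \<noteq> UNIV" by blast
  have proper_sub: "J \<subseteq> N" if "left_ideal J" "J \<noteq> UNIV" for J
    using left_ideal_proper_no_left_inverse[OF that] unfolding N_def ring_unit_def by blast
  have "maximal_left_ideal N"
    unfolding maximal_left_ideal_def using \<open>left_ideal N\<close> \<open>N \<noteq> UNIV\<close> proper_sub by auto
  moreover have "M = N" if "maximal_left_ideal M" for M
  proof -
    have "left_ideal M" "M \<noteq> UNIV"
      and "\<And>J. left_ideal J \<and> M \<subseteq> J \<and> J \<noteq> UNIV \<Longrightarrow> J = M"
      using that unfolding maximal_left_ideal_def by blast+
    with proper_sub \<open>left_ideal N\<close> \<open>N \<noteq> UNIV\<close> show ?thesis by blast
  qed
  ultimately show ?thesis unfolding local_ring_def by blast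
qed

lemma local_ring_maximal_left_ideal_eq:
  assumes "local_ring TYPE('a::ring_1)" and M: "maximal_left_ideal (M::'a set)"
  shows "M = {x. \<forall>a. a * x \<noteq> 1}"
proof
  have "left_ideal M" "M \<noteq> UNIV" using M unfolding maximal_left_ideal_def by blast+
  then show "M \<subseteq> {x. \<forall>a. a * x \<noteq> 1}" using left_ideal_proper_no_left_inverse by blast
next
  have "\<exists>!M::'a set. maximal_left_ideal M" using assms(1) unfolding local_ring_def .
  then have unique: "M' = M" if "maximal_left_ideal M'" for M'
    using M that by (elim alt_ex1E) blast
  show "{x. \<forall>a. a * x \<noteq> 1} \<subseteq> M"
  proof
    fix x :: 'a assume "x \<in> {x. \<forall>a. a * x \<noteq> 1}"
    then have "1 \<notin> range (\<lambda>r. r * x)" by auto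
    then have "range (\<lambda>r. r * x) \<noteq> UNIV" by auto
    with left_ideal_principal obtain M' where "maximal_left_ideal M'" "range (\<lambda>r. r * x) \<subseteq> M'"
      using maximal_left_ideal_containing by blast
    moreover have "x \<in> range (\<lambda>r. r * x)" using rangeI[of "\<lambda>r. r * x" 1] by simp
    ultimately show "x \<in> M" using unique by blast
  qed
qed

lemma local_ring_obtain_maximal_left_ideal:
  assumes "local_ring TYPE('a)"
  obtains M :: "'a::ring_1 set" where "left_ideal M" "1 \<notin> M" "M = {x. \<forall>a. a * x \<noteq> 1}"
proof -
  obtain M :: "'a set" where max: "maximal_left_ideal M"
    using assms unfolding local_ring_def by blast
  then have "left_ideal M" "M \<noteq> UNIV" unfolding maximal_left_ideal_def by blast+
  then have "1 \<notin> M" using left_ideal_eq_UNIV_iff by blast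
  with \<open>left_ideal M\<close> show ?thesis using local_ring_maximal_left_ideal_eq[OF assms max] by (rule that)
qed

lemma left_inverse_imp_unit_if_local_ring:
  assumes "local_ring TYPE('a::ring_1)" and ay: "a * y = (1::'a)"
  shows "ring_unit y"
proof -
  obtain M :: "'a set" where "left_ideal M" "1 \<notin> M" and M: "M = {x. \<forall>a. a * x \<noteq> 1}"
    using local_ring_obtain_maximal_left_ideal[OF assms(1)] .
  have "a \<notin> M"
  proof
    assume "a \<in> M"
    then have "y * a \<in> M" using \<open>left_ideal M\<close> unfolding left_ideal_def by blast
    \<comment> \<open>(1 - y a) y = 0 forbids a left inverse of 1 - y a, as y \<noteq> 0.\<close>
    have "(1 - y * a) * y = 0" using ay by (simp add: algebra_simps)
    have "c * (1 - y * a) \<noteq> 1" for c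
    proof
      assume "c * (1 - y * a) = 1"
      then have "y = c * ((1 - y * a) * y)" by (simp add: mult.assoc[symmetric])
      with \<open>(1 - y * a) * y = 0\<close> ay show False by simp
    qed
    then have "1 - y * a \<in> M" using M by blast
    with \<open>y * a \<in> M\<close> have "y * a + (1 - y * a) \<in> M" using left_ideal_add \<open>left_ideal M\<close> by blast
    with \<open>1 \<notin> M\<close> show False by simp
  qed
  then obtain c where "c * a = 1" using M by blast
  have "c = c * (a * y)" using ay by simp
  also have "\<dots> = y" using \<open>c * a = 1\<close> by (simp add: mult.assoc[symmetric])
  finally have "c = y" .
  with \<open>c * a = 1\<close> ay show ?thesis unfolding ring_unit_def by blast
qed

lemma unit_or_one_minus_unit_if_local_ring:
  assumes "local_ring TYPE('a::ring_1)"
  shows "ring_unit x \<or> ring_unit (1 - (x::'a))"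
proof (rule ccontr)
  obtain M :: "'a set" where "left_ideal M" "1 \<notin> M" and M: "M = {x. \<forall>a. a * x \<noteq> 1}"
    using local_ring_obtain_maximal_left_ideal[OF assms] .
  assume "\<not> (ring_unit x \<or> ring_unit (1 - x))"
  then have "x \<in> M" "1 - x \<in> M" using M left_inverse_imp_unit_if_local_ring[OF assms] by blast+
  then have "x + (1 - x) \<in> M" using left_ideal_add \<open>left_ideal M\<close> by blast
  with \<open>1 \<notin> M\<close> show False by simp
qed

theorem proposition2p6:
  fixes st :: "'a::ring_1 \<Rightarrow> 'a"
  assumes "star_ring st"
  shows "((star_clean_ring st \<and> (\<forall>p. projection st p \<longrightarrow> p = 0 \<or> p = 1))
           \<longleftrightarrow> (clean_ring TYPE('a) \<and> (\<forall>e::'a. idempotent e \<longrightarrow> e = 0 \<or> e = 1)))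
       \<and> ((clean_ring TYPE('a) \<and> (\<forall>e::'a. idempotent e \<longrightarrow> e = 0 \<or> e = 1))
           \<longleftrightarrow> local_ring TYPE('a))"
proof -
  have "projection st 0" "projection st 1"
    using star_ring_zero[OF assms] star_ring_one[OF assms] by (simp_all add: projection_def)
  then have star_clean: "(star_clean_ring st \<and> (\<forall>p. projection st p \<longrightarrow> p = 0 \<or> p = 1))
      \<longleftrightarrow> (\<forall>x::'a. ring_unit x \<or> ring_unit (1 - x))"
    unfolding star_clean_ring_def
    by (rule decomposition_iff_unit_or_one_minus_unit) (simp add: projection_def)
  have clean: "(clean_ring TYPE('a) \<and> (\<forall>e::'a. idempotent e \<longrightarrow> e = 0 \<or> e = 1))
      \<longleftrightarrow> (\<forall>x::'a. ring_unit x \<or> ring_unit (1 - x))"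
    unfolding clean_ring_def
    by (rule decomposition_iff_unit_or_one_minus_unit) (simp_all add: idempotent_def)
  have "local_ring TYPE('a) \<longleftrightarrow> (\<forall>x::'a. ring_unit x \<or> ring_unit (1 - x))"
    using local_ring_if_unit_or_one_minus_unit unit_or_one_minus_unit_if_local_ring by blast
  with star_clean clean show ?thesis by blast
qed

end
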